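(* Let $G=(V,E)$ be an atomic bispanning graph, $v\in V$ a vertex of degree $3$ with adjacent vertices $x,y,z$ joined to $v$ by edges $e_x,e_y,e_z$, and let $G_{x,y},G_{x,z},G_{y,z}$ be the reduction graphs. Then $$V_{\tau(G)}=\rho_{e_{x,y},z}(V_{\tau(G_{x,y})})\,\dot\cup\,\rho_{e_{x,z},y}(V_{\tau(G_{x,z})})\,\dot\cup\,\rho_{e_{y,z},x}(V_{\tau(G_{y,z})}),$$ where for $(a,b)\in\{(x,y),(x,z),(y,z)\}$ and $c$ the remaining neighbour, $\rho_{e_{a,b},c}:V_{\tau(G_{a,b})}\to V_{\tau(G)}$ maps $(S,T)$ to $(S-e_{a,b}+e_a+e_b,\;T+e_c)$ if $e_{a,b}\in S$ and to $(S+e_c,\;T-e_{a,b}+e_a+e_b)$ if $e_{a,b}\in T$.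
   Context: Graphs are finite, undirected, may have parallel edges, no loops; $X+a=X\cup\{a\}$, $X-a=X\setminus\{a\}$. A spanning tree is $T\subseteq E$ with $(V,T)$ connected and acyclic; $G$ is bispanning if $E$ is the union of two disjoint spanning trees; atomic if its only bispanning subgraphs are itself and single vertices. For a bispanning graph $H$ with edge set $F$, $V_{\tau(H)}$ is the set of ordered pairs $(S,T)$ of disjoint spanning trees of $H$ with $S\cup T=F$. The reduction graph $G_{a,b}$ has vertex set $V-v$ and edge set $E-e_x-e_y-e_z+e_{a,b}$, where $e_{a,b}$ is a new edge with ends $a,b$ (it is bispanning). *)

theory Defs
  imports Main
begin

text \<open>Multigraphs: a vertex set V, an edge set E (edge labels of type 'e), and an
 incidence map inc giving the set of ends of each edge.  Parallel edges are distinct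
 labels with equal ends.  No loops: every edge has exactly two ends.\<close>

definition wf_graph :: "'v set \<Rightarrow> 'e set \<Rightarrow> ('e \<Rightarrow> 'v set) \<Rightarrow> bool" where
  "wf_graph V E inc \<longleftrightarrow> finite V \<and> finite E \<and> (\<forall>e\<in>E. inc e \<subseteq> V \<and> card (inc e) = 2)"

definition adj :: "('e \<Rightarrow> 'v set) \<Rightarrow> 'e set \<Rightarrow> ('v \<times> 'v) set" where
  "adj inc F = {(u, w). \<exists>e\<in>F. inc e = {u, w}}"

definition connected_on :: "'v set \<Rightarrow> ('e \<Rightarrow> 'v set) \<Rightarrow> 'e set \<Rightarrow> bool" where
  "connected_on V inc F \<longleftrightarrow> (\<forall>u\<in>V. \<forall>w\<in>V. (u, w) \<in> (adj inc F)\<^sup>*)"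

definition is_cycle :: "('e \<Rightarrow> 'v set) \<Rightarrow> 'e set \<Rightarrow> 'v list \<Rightarrow> 'e list \<Rightarrow> bool" where
  "is_cycle inc F vs es \<longleftrightarrow>
     length vs = length es \<and> length es \<ge> 1 \<and> distinct vs \<and> distinct es \<and> set es \<subseteq> F \<and>
     (\<forall>i < length es. inc (es ! i) = {vs ! i, vs ! ((i + 1) mod length es)})"

definition acyclic_edges :: "('e \<Rightarrow> 'v set) \<Rightarrow> 'e set \<Rightarrow> bool" where
  "acyclic_edges inc F \<longleftrightarrow> \<not> (\<exists>vs es. is_cycle inc F vs es)"

definition spanning_tree :: "'v set \<Rightarrow> 'e set \<Rightarrow> ('e \<Rightarrow> 'v set) \<Rightarrow> 'e set \<Rightarrow> bool" where
  "spanning_tree V E inc T \<longleftrightarrow> T \<subseteq> E \<and> connected_on V inc T \<and> acyclic_edges inc T"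

definition tree_pairs :: "'v set \<Rightarrow> 'e set \<Rightarrow> ('e \<Rightarrow> 'v set) \<Rightarrow> ('e set \<times> 'e set) set" where
  "tree_pairs V E inc = {(S, T). spanning_tree V E inc S \<and> spanning_tree V E inc T \<and>
                                  S \<inter> T = {} \<and> S \<union> T = E}"

definition bispanning :: "'v set \<Rightarrow> 'e set \<Rightarrow> ('e \<Rightarrow> 'v set) \<Rightarrow> bool" where
  "bispanning V E inc \<longleftrightarrow> tree_pairs V E inc \<noteq> {}"

definition subgraph :: "'v set \<Rightarrow> 'e set \<Rightarrow> 'v set \<Rightarrow> 'e set \<Rightarrow> ('e \<Rightarrow> 'v set) \<Rightarrow> bool" where
  "subgraph V' E' V E inc \<longleftrightarrow> V' \<noteq> {} \<and> V' \<subseteq> V \<and> E' \<subseteq> E \<and> (\<forall>e\<in>E'. inc e \<subseteq> V')"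

definition atomic :: "'v set \<Rightarrow> 'e set \<Rightarrow> ('e \<Rightarrow> 'v set) \<Rightarrow> bool" where
  "atomic V E inc \<longleftrightarrow>
     (\<forall>V' E'. subgraph V' E' V E inc \<and> bispanning V' E' inc \<longrightarrow>
        (V' = V \<and> E' = E) \<or> (card V' = 1 \<and> E' = {}))"

definition red_V :: "'v set \<Rightarrow> 'v \<Rightarrow> 'v set" where
  "red_V V v = V - {v}"

definition red_E :: "'e set \<Rightarrow> 'e \<Rightarrow> 'e \<Rightarrow> 'e \<Rightarrow> 'e \<Rightarrow> 'e set" where
  "red_E E ex ey ez eab = (E - {ex, ey, ez}) \<union> {eab}"

definition red_inc :: "('e \<Rightarrow> 'v set) \<Rightarrow> 'e \<Rightarrow> 'v \<Rightarrow> 'v \<Rightarrow> ('e \<Rightarrow> 'v set)" where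
  "red_inc inc eab a b = inc(eab := {a, b})"

text \<open>rho_{eab,c}, where ea, eb are the edges from v to a, b and ec the edge from v to c.\<close>
definition rho :: "'e \<Rightarrow> 'e \<Rightarrow> 'e \<Rightarrow> 'e \<Rightarrow> 'e set \<times> 'e set \<Rightarrow> 'e set \<times> 'e set" where
  "rho eab ea eb ec ST =
     (let S = fst ST; T = snd ST in
      if eab \<in> S then (S - {eab} \<union> {ea, eb}, T \<union> {ec})
      else (S \<union> {ec}, T - {eab} \<union> {ea, eb}))"

end

theory Submission
  imports Defs
begin

text \<open>Every pair (S, T) of complementary spanning trees of G must use the three edges at
  the degree-3 vertex v in a 2+1 pattern, since each tree needs an edge at v.  If e_a, e_b
  lie in one tree and e_c in the other, then contracting the path a-v-b of the first tree to
  the edge e_ab and deleting the pendant edge e_c of the second gives a pair of complementary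
  spanning trees of G_ab, and rho_{e_ab,c} undoes exactly this operation.  Hence the image of
  rho_{e_ab,c} consists of precisely those pairs in which e_c is separated from e_a and e_b,
  and the three images partition V_tau(G).\<close>

abbreviation reachable :: "('e \<Rightarrow> 'v set) \<Rightarrow> 'e set \<Rightarrow> 'v \<Rightarrow> 'v \<Rightarrow> bool" where
  "reachable inc F u w \<equiv> (u, w) \<in> (adj inc F)\<^sup>*"

lemma adj_sym: "sym (adj inc F)"
  unfolding sym_def adj_def by (auto simp: insert_commute)

lemma reachable_sym: "reachable inc F u w \<Longrightarrow> reachable inc F w u"
  by (rule symD[OF sym_rtrancl[OF adj_sym]])

lemma reachable_trans: "reachable inc F u w \<Longrightarrow> reachable inc F w x \<Longrightarrow> reachable inc F u x"
  by (rule rtrancl_trans)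

lemma adj_mono: "F \<subseteq> G \<Longrightarrow> adj inc F \<subseteq> adj inc G"
  unfolding adj_def by auto

lemma reachable_mono: "reachable inc F u w \<Longrightarrow> F \<subseteq> G \<Longrightarrow> reachable inc G u w"
  using rtrancl_mono[OF adj_mono] by blast

lemma adj_cong: "\<forall>e\<in>F. inc e = inc' e \<Longrightarrow> adj inc F = adj inc' F"
  unfolding adj_def by auto

lemma reachable_cong:
  "\<forall>e\<in>F. inc e = inc' e \<Longrightarrow> reachable inc F u w \<longleftrightarrow> reachable inc' F u w"
  by (simp only: adj_cong)

lemma adj_edge: "e \<in> F \<Longrightarrow> inc e = {u, w} \<Longrightarrow> (u, w) \<in> adj inc F"
  unfolding adj_def by auto

lemma reachable_edge: "e \<in> F \<Longrightarrow> inc e = {u, w} \<Longrightarrow> reachable inc F u w"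
  by (metis adj_edge r_into_rtrancl)

lemma reachable_from_isolated:
  assumes "\<forall>g\<in>F. v \<notin> inc g" and "reachable inc F v w"
  shows "w = v"
  using assms(2)
proof (induction rule: rtrancl_induct)
  case (step a b)
  then show ?case using assms(1) unfolding adj_def by auto
qed simp

lemma spanning_tree_has_edge_at:
  assumes "spanning_tree V E inc T" "v \<in> V" "x \<in> V" "x \<noteq> v"
  obtains g where "g \<in> T" "v \<in> inc g"
proof -
  have "reachable inc T v x"
    using assms unfolding spanning_tree_def connected_on_def by blast
  then have "\<not> (\<forall>g\<in>T. v \<notin> inc g)"
    using reachable_from_isolated assms(4) by metis
  then show thesis
    using that by blast
qed

definition is_path :: "('e \<Rightarrow> 'v set) \<Rightarrow> 'e set \<Rightarrow> 'v list \<Rightarrow> 'e list \<Rightarrow> bool" where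
  "is_path inc F vs es \<longleftrightarrow>
     length vs = Suc (length es) \<and> distinct vs \<and> distinct es \<and> set es \<subseteq> F \<and>
     (\<forall>i < length es. inc (es ! i) = {vs ! i, vs ! Suc i})"

lemma is_path_singleton: "is_path inc F [u] []"
  unfolding is_path_def by simp

lemma is_path_prefix:
  assumes "is_path inc F vs es" "k < length vs"
  shows "is_path inc F (take (Suc k) vs) (take k es)"
  using assms unfolding is_path_def by (auto simp: set_take_subset[THEN subset_trans])

lemma is_path_snoc:
  assumes path: "is_path inc F vs es" and f: "f \<in> F" "inc f = {last vs, b}" and b: "b \<notin> set vs"
  shows "is_path inc F (vs @ [b]) (es @ [f])"
proof -
  have len: "length vs = Suc (length es)" and steps: "\<forall>i < length es. inc (es ! i) = {vs ! i, vs ! Suc i}"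
    using path unfolding is_path_def by auto
  have last_vs: "last vs = vs ! length es"
    using len by (metis diff_Suc_1 last_conv_nth list.size(3) nat.distinct(1))
  have "f \<notin> set es"
  proof
    assume "f \<in> set es"
    then obtain j where "j < length es" "es ! j = f" by (auto simp: in_set_conv_nth)
    then have "b \<in> {vs ! j, vs ! Suc j}" "Suc j < length vs"
      using steps f len by auto
    then show False using b by auto
  qed
  then show ?thesis
    using path f b len last_vs unfolding is_path_def by (auto simp: nth_append less_Suc_eq)
qed

lemma reachable_obtains_path:
  assumes "reachable inc F u w"
  obtains vs es where "is_path inc F vs es" "hd vs = u" "last vs = w"
  using assms
proof (induction arbitrary: thesis rule: rtrancl_induct)
  case base
  then show ?case using is_path_singleton by fastforce
next
  case (step a b)
  obtain vs es where path: "is_path inc F vs es" "hd vs = u" "last vs = a"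
    using step.IH by blast
  obtain f where f: "f \<in> F" "inc f = {a, b}"
    using step.hyps(2) unfolding adj_def by auto
  have ne: "vs \<noteq> []" using path(1) unfolding is_path_def by auto
  show ?case
  proof (cases "b \<in> set vs")
    case True
    then obtain k where k: "k < length vs" "vs ! k = b" by (auto simp: in_set_conv_nth)
    have "last (take (Suc k) vs) = b"
      using k by (simp add: take_Suc_conv_app_nth)
    then show ?thesis
      using step.prems[OF is_path_prefix[OF path(1) k(1)]] path(2) by simp
  next
    case False
    then show ?thesis
      using step.prems[OF is_path_snoc[OF path(1) f(1)]] path f ne by (simp add: hd_append)
  qed
qed

lemma is_cycle_close_path:
  assumes path: "is_path inc (F - {e}) vs es" and e: "e \<in> F" "inc e = {hd vs, last vs}"
  shows "is_cycle inc F vs (es @ [e])"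
proof -
  have len: "length vs = Suc (length es)" and steps: "\<forall>i < length es. inc (es ! i) = {vs ! i, vs ! Suc i}"
    using path unfolding is_path_def by auto
  have ends: "hd vs = vs ! 0" "last vs = vs ! length es"
    using len by (metis diff_Suc_1 hd_conv_nth last_conv_nth list.size(3) nat.distinct(1))+
  have "inc ((es @ [e]) ! i) = {vs ! i, vs ! ((i + 1) mod length (es @ [e]))}"
    if "i < length (es @ [e])" for i
  proof (cases "i < length es")
    case False
    with that have "i = length es" by simp
    with e ends show ?thesis by (simp add: insert_commute)
  qed (use steps in \<open>simp add: nth_append\<close>)
  then show ?thesis
    using path e len unfolding is_cycle_def is_path_def by auto
qed

lemma is_cycle_reachable_without_edge:
  assumes "is_cycle inc F vs es"
  shows "reachable inc (F - {es ! 0}) (vs ! 0) (vs ! (1 mod length es))"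
proof -
  define n where "n = length es"
  have cyc: "length es = n" "n \<ge> 1" "distinct es" "set es \<subseteq> F"
    "\<forall>i<n. inc (es ! i) = {vs ! i, vs ! ((i + 1) mod n)}"
    using assms unfolding is_cycle_def n_def by auto
  have walk_back: "reachable inc (F - {es ! 0}) (vs ! ((n - k) mod n)) (vs ! 0)" if "k < n" for k
    using that
  proof (induction k)
    case (Suc k)
    define j where "j = n - Suc k"
    have j: "j < n" "j \<noteq> 0" "j + 1 = n - k"
      using Suc.prems unfolding j_def by auto
    have "es ! j \<in> F - {es ! 0}"
      using cyc j by (auto simp: nth_eq_iff_index_eq)
    moreover have "inc (es ! j) = {vs ! j, vs ! ((n - k) mod n)}"
      using cyc j by metis
    ultimately have "(vs ! j, vs ! ((n - k) mod n)) \<in> adj inc (F - {es ! 0})"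
      by (rule adj_edge)
    with Suc show ?case
      unfolding j_def by (auto intro: converse_rtrancl_into_rtrancl)
  qed simp
  show ?thesis
    using walk_back[of "n - 1"] cyc(2) reachable_sym unfolding n_def by fastforce
qed

lemma acyclic_edges_iff:
  "acyclic_edges inc F \<longleftrightarrow> (\<forall>e\<in>F. \<forall>u w. inc e = {u, w} \<longrightarrow> \<not> reachable inc (F - {e}) u w)"
proof
  assume acyc: "acyclic_edges inc F"
  show "\<forall>e\<in>F. \<forall>u w. inc e = {u, w} \<longrightarrow> \<not> reachable inc (F - {e}) u w"
  proof (intro ballI allI impI notI)
    fix e u w
    assume e: "e \<in> F" "inc e = {u, w}" and "reachable inc (F - {e}) u w"
    then obtain vs es where "is_path inc (F - {e}) vs es" "hd vs = u" "last vs = w"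
      by (blast elim: reachable_obtains_path)
    with e have "is_cycle inc F vs (es @ [e])"
      by (intro is_cycle_close_path) auto
    with acyc show False
      unfolding acyclic_edges_def by blast
  qed
next
  assume no_cycle_edge: "\<forall>e\<in>F. \<forall>u w. inc e = {u, w} \<longrightarrow> \<not> reachable inc (F - {e}) u w"
  show "acyclic_edges inc F"
    unfolding acyclic_edges_def
  proof
    assume "\<exists>vs es. is_cycle inc F vs es"
    then obtain vs es where cyc: "is_cycle inc F vs es" by blast
    then have "0 < length es" "set es \<subseteq> F"
      and "\<forall>i < length es. inc (es ! i) = {vs ! i, vs ! ((i + 1) mod length es)}"
      unfolding is_cycle_def by auto
    then have "es ! 0 \<in> F" "inc (es ! 0) = {vs ! 0, vs ! (1 mod length es)}"
      by auto
    with no_cycle_edge is_cycle_reachable_without_edge[OF cyc] show False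
      by blast
  qed
qed

lemma reachable_remove_pendant_edge:
  assumes pendant: "\<forall>g\<in>F. v \<in> inc g \<longrightarrow> g = e" and e: "inc e = {v, z}"
    and "reachable inc F u w" "u \<noteq> v"
  shows "(w \<noteq> v \<longrightarrow> reachable inc (F - {e}) u w) \<and> (w = v \<longrightarrow> reachable inc (F - {e}) u z)"
  using assms(3)
proof (induction rule: rtrancl_induct)
  case base
  then show ?case using assms(4) by simp
next
  case (step a b)
  obtain g where g: "g \<in> F" "inc g = {a, b}"
    using step.hyps(2) unfolding adj_def by auto
  show ?case
  proof (cases "g = e")
    case True
    then have "{a, b} = {v, z}" using g e by simp
    then show ?thesis using step.IH by (auto simp: doubleton_eq_iff)
  next
    case False
    then have "a \<noteq> v" "b \<noteq> v" using g pendant by auto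
    moreover have "(a, b) \<in> adj inc (F - {e})" using g False by (intro adj_edge) auto
    ultimately show ?thesis using step.IH by (meson rtrancl.rtrancl_into_rtrancl)
  qed
qed

lemma reachable_contract_path:
  assumes at_v: "\<forall>g\<in>F. v \<in> inc g \<longrightarrow> g = ea \<or> g = eb"
    and ea: "inc ea = {v, a}" and eb: "inc eb = {v, b}" and eab: "eab \<notin> F"
    and "reachable inc F u w" "u \<noteq> v"
  shows "(w \<noteq> v \<longrightarrow> reachable (inc(eab := {a, b})) (F - {ea, eb} \<union> {eab}) u w) \<and>
         (w = v \<longrightarrow> reachable (inc(eab := {a, b})) (F - {ea, eb} \<union> {eab}) u a)"
  using assms(5)
proof (induction rule: rtrancl_induct)
  case base
  then show ?case using assms(6) by simp
next
  case (step c d)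
  let ?inc = "inc(eab := {a, b})" and ?F = "F - {ea, eb} \<union> {eab}"
  have ab: "(a, b) \<in> adj ?inc ?F" "(b, a) \<in> adj ?inc ?F"
    by (auto intro!: adj_edge[of eab] simp: insert_commute)
  obtain g where g: "g \<in> F" "inc g = {c, d}"
    using step.hyps(2) unfolding adj_def by auto
  consider "g = ea" | "g = eb" | "g \<noteq> ea" "g \<noteq> eb" by blast
  then show ?case
  proof cases
    case 1
    then have "{c, d} = {v, a}" using g ea by simp
    then show ?thesis using step.IH by (auto simp: doubleton_eq_iff)
  next
    case 2
    then have "c = v \<and> d = b \<or> c = b \<and> d = v" using g eb by (auto simp: doubleton_eq_iff)
    then show ?thesis
      using step.IH ab by (metis rtrancl_into_rtrancl)
  next
    case 3
    then have "c \<noteq> v" "d \<noteq> v" using g at_v by auto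
    moreover have "(c, d) \<in> adj ?inc ?F" using g 3 eab by (intro adj_edge[of g]) auto
    ultimately show ?thesis using step.IH by (meson rtrancl.rtrancl_into_rtrancl)
  qed
qed

lemma reachable_expand_edge:
  assumes ea: "inc ea = {v, a}" and eb: "inc eb = {v, b}"
    and "reachable (inc(eab := {a, b})) F u w"
  shows "reachable inc (F - {eab} \<union> {ea, eb}) u w"
  using assms(3)
proof (induction rule: rtrancl_induct)
  case (step c d)
  let ?F = "F - {eab} \<union> {ea, eb}"
  obtain g where g: "g \<in> F" "(inc(eab := {a, b})) g = {c, d}"
    using step.hyps(2) unfolding adj_def by auto
  show ?case
  proof (cases "g = eab")
    case True
    have "reachable inc ?F a v" "reachable inc ?F v b"
      using ea eb by (auto intro: reachable_edge simp: insert_commute)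
    then have "reachable inc ?F a b" "reachable inc ?F b a"
      by (auto intro: reachable_trans reachable_sym)
    moreover have "{c, d} = {a, b}" using g True by simp
    ultimately have "reachable inc ?F c d" by (auto simp: doubleton_eq_iff)
    then show ?thesis using step.IH by (rule reachable_trans[rotated])
  next
    case False
    then have "(c, d) \<in> adj inc ?F" using g by (intro adj_edge[of g]) auto
    then show ?thesis using step.IH by (rule rtrancl_into_rtrancl[rotated])
  qed
qed simp

lemma acyclic_edges_mono: "F \<subseteq> G \<Longrightarrow> acyclic_edges inc G \<Longrightarrow> acyclic_edges inc F"
  unfolding acyclic_edges_def is_cycle_def by blast

lemma is_cycle_cong:
  assumes "\<forall>e\<in>F. inc e = inc' e"
  shows "is_cycle inc F vs es \<longleftrightarrow> is_cycle inc' F vs es"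
proof -
  have "set es \<subseteq> F \<Longrightarrow> i < length es \<Longrightarrow> inc (es ! i) = inc' (es ! i)" for i
    using assms nth_mem by blast
  then show ?thesis unfolding is_cycle_def by auto
qed

lemma acyclic_edges_cong:
  "\<forall>e\<in>F. inc e = inc' e \<Longrightarrow> acyclic_edges inc F \<longleftrightarrow> acyclic_edges inc' F"
  unfolding acyclic_edges_def using is_cycle_cong by blast

lemma tree_pairs_swap: "(S, T) \<in> tree_pairs V E inc \<longleftrightarrow> (T, S) \<in> tree_pairs V E inc"
  unfolding tree_pairs_def by auto

definition pair_split :: "'e \<Rightarrow> 'e \<Rightarrow> 'e \<Rightarrow> 'e set \<times> 'e set \<Rightarrow> bool" where
  "pair_split ea eb ec ST \<longleftrightarrow>
     (ea \<in> fst ST \<and> eb \<in> fst ST \<and> ec \<in> snd ST) \<or> (ea \<in> snd ST \<and> eb \<in> snd ST \<and> ec \<in> fst ST)"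

lemma pair_split_commute: "pair_split ea eb ec ST \<longleftrightarrow> pair_split eb ea ec ST"
  unfolding pair_split_def by auto

lemma tree_pairs_pair_split_exclusive:
  "p \<in> tree_pairs V E inc \<Longrightarrow> pair_split ea eb ec p \<Longrightarrow> \<not> pair_split ea ec eb p"
  unfolding tree_pairs_def pair_split_def by auto

locale degree3_reduction =
  fixes V :: "'v set" and E :: "'e set" and inc :: "'e \<Rightarrow> 'v set"
    and v a b c :: 'v and ea eb ec eab :: 'e
  assumes wf: "wf_graph V E inc"
    and edges_at_v: "{e \<in> E. v \<in> inc e} = {ea, eb, ec}"
    and distinct_edges: "ea \<noteq> eb" "ea \<noteq> ec" "eb \<noteq> ec"
    and inc_a: "inc ea = {v, a}" and inc_b: "inc eb = {v, b}" and inc_c: "inc ec = {v, c}"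
    and fresh: "eab \<notin> E"
begin

abbreviation "V' \<equiv> V - {v}"
abbreviation "E' \<equiv> E - {ea, eb, ec} \<union> {eab}"
abbreviation "inc' \<equiv> inc(eab := {a, b})"

lemma edges_in_E: "ea \<in> E" "eb \<in> E" "ec \<in> E"
  using edges_at_v by blast+

lemma edge_at_v: "g \<in> E \<Longrightarrow> v \<in> inc g \<Longrightarrow> g = ea \<or> g = eb \<or> g = ec"
  using edges_at_v by blast

lemma neighbours: "a \<in> V" "a \<noteq> v" "b \<in> V" "b \<noteq> v" "c \<in> V" "c \<noteq> v"
proof -
  have ends: "\<forall>e\<in>E. inc e \<subseteq> V \<and> card (inc e) = 2"
    using wf unfolding wf_graph_def by blast
  show "a \<in> V" "b \<in> V" "c \<in> V"
    using ends edges_in_E inc_a inc_b inc_c by blast+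
  show "a \<noteq> v" "b \<noteq> v" "c \<noteq> v"
    using ends edges_in_E inc_a inc_b inc_c by force+
qed

lemma inc'_agrees: "X \<subseteq> E \<Longrightarrow> \<forall>g\<in>X. inc' g = inc g"
  using fresh by auto

text \<open>A cycle through e_a or e_b must use both, as v has no other edge, so it would give an
  a-b path in S' - {e_ab}; any other cycle avoids v and contracts to a cycle of S'.\<close>

lemma acyclic_edges_expand:
  assumes S'E': "S' \<subseteq> E'" and acyc: "acyclic_edges inc' S'" and eab: "eab \<in> S'"
  shows "acyclic_edges inc (S' - {eab} \<union> {ea, eb})"
  unfolding acyclic_edges_iff
proof (intro ballI allI impI notI)
  let ?S = "S' - {eab} \<union> {ea, eb}"
  have agree: "\<forall>g\<in>S' - {eab}. inc' g = inc g" by simp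
  have off_v: "\<forall>g\<in>S' - {eab}. v \<notin> inc g"
    using S'E' edge_at_v by blast
  have not_in_S': "ea \<notin> S'" "eb \<notin> S'" using S'E' edges_in_E fresh by auto
  have "\<not> reachable inc' (S' - {eab}) a b"
    using acyc eab unfolding acyclic_edges_iff by (metis fun_upd_same)
  then have no_ab: "\<not> reachable inc (S' - {eab}) a b"
    using reachable_cong[OF agree] by blast
  fix g p q
  assume g: "g \<in> ?S" and inc_g: "inc g = {p, q}" and r: "reachable inc (?S - {g}) p q"
  consider "g = ea" | "g = eb" | "g \<in> S' - {eab}" using g by auto
  then show False
  proof cases
    case 1
    then have av: "reachable inc (?S - {ea}) a v" using inc_g inc_a r reachable_sym
      by (auto simp: doubleton_eq_iff)
    have "\<forall>h\<in>?S - {ea}. v \<in> inc h \<longrightarrow> h = eb" using off_v by auto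
    from reachable_remove_pendant_edge[OF this inc_b av neighbours(2)]
    have "reachable inc (?S - {ea} - {eb}) a b" by simp
    moreover have "?S - {ea} - {eb} = S' - {eab}" using not_in_S' distinct_edges by auto
    ultimately show False using no_ab by simp
  next
    case 2
    then have bv: "reachable inc (?S - {eb}) b v" using inc_g inc_b r reachable_sym
      by (auto simp: doubleton_eq_iff)
    have "\<forall>h\<in>?S - {eb}. v \<in> inc h \<longrightarrow> h = ea" using off_v by auto
    from reachable_remove_pendant_edge[OF this inc_a bv neighbours(4)]
    have "reachable inc (?S - {eb} - {ea}) b a" by simp
    moreover have "?S - {eb} - {ea} = S' - {eab}" using not_in_S' distinct_edges by auto
    ultimately show False using no_ab reachable_sym by metis
  next
    case 3
    then have pq: "p \<noteq> v" "q \<noteq> v" using off_v inc_g by auto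
    have "\<forall>h\<in>?S - {g}. v \<in> inc h \<longrightarrow> h = ea \<or> h = eb" using off_v by auto
    moreover have "eab \<notin> ?S - {g}" using not_in_S' fresh edges_in_E by auto
    ultimately have "reachable inc' (?S - {g} - {ea, eb} \<union> {eab}) p q"
      using reachable_contract_path[OF _ inc_a inc_b _ r pq(1)] pq(2) by simp
    moreover have "?S - {g} - {ea, eb} \<union> {eab} = S' - {g}" using 3 eab not_in_S' by auto
    moreover have "inc' g = {p, q}" using agree 3 inc_g by auto
    ultimately show False
      using acyc 3 unfolding acyclic_edges_iff by (metis DiffD1)
  qed
qed

lemma spanning_tree_expand:
  assumes tree: "spanning_tree V' E' inc' S'" and eab: "eab \<in> S'"
  shows "spanning_tree V E inc (S' - {eab} \<union> {ea, eb})"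
proof -
  let ?S = "S' - {eab} \<union> {ea, eb}"
  have S'E': "S' \<subseteq> E'" and conn: "connected_on V' inc' S'" and acyc: "acyclic_edges inc' S'"
    using tree unfolding spanning_tree_def by auto
  have "reachable inc ?S a u" if "u \<in> V" for u
  proof (cases "u = v")
    case True
    then show ?thesis using inc_a by (intro reachable_edge[of ea]) (auto simp: insert_commute)
  next
    case False
    then have "reachable inc' S' a u"
      using conn that neighbours unfolding connected_on_def by blast
    then show ?thesis using reachable_expand_edge[where eab=eab, OF inc_a inc_b] by blast
  qed
  then have "connected_on V inc ?S"
    unfolding connected_on_def by (metis reachable_sym reachable_trans)
  moreover have "?S \<subseteq> E" using S'E' edges_in_E by auto
  ultimately show ?thesis
    unfolding spanning_tree_def using acyclic_edges_expand[OF S'E' acyc eab] by blast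
qed

lemma acyclic_edges_attach_pendant:
  assumes T'E: "T' \<subseteq> E - {ea, eb, ec}" and acyc: "acyclic_edges inc' T'"
  shows "acyclic_edges inc (T' \<union> {ec})"
  unfolding acyclic_edges_iff
proof (intro ballI allI impI notI)
  let ?T = "T' \<union> {ec}"
  have agree: "\<forall>g\<in>T'. inc' g = inc g" using inc'_agrees T'E by blast
  have off_v: "\<forall>g\<in>T'. v \<notin> inc g" using T'E edge_at_v by blast
  fix g p q assume g: "g \<in> ?T" and inc_g: "inc g = {p, q}" and r: "reachable inc (?T - {g}) p q"
  show False
  proof (cases "g = ec")
    case True
    have "?T - {ec} = T'" using T'E by auto
    then have "reachable inc T' v c"
      using True inc_g inc_c r reachable_sym by (auto simp: doubleton_eq_iff)
    then show False
      using reachable_from_isolated[OF off_v] neighbours(6) by blast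
  next
    case False
    then have gT': "g \<in> T'" using g by auto
    then have pq: "p \<noteq> v" "q \<noteq> v" using off_v inc_g by auto
    have "\<forall>h\<in>?T - {g}. v \<in> inc h \<longrightarrow> h = ec" using off_v by auto
    from reachable_remove_pendant_edge[OF this inc_c r pq(1)] pq(2)
    have "reachable inc (?T - {g} - {ec}) p q" by simp
    moreover have "?T - {g} - {ec} = T' - {g}" using T'E by auto
    ultimately have "reachable inc' (T' - {g}) p q"
      using reachable_cong[of "T' - {g}" inc' inc] agree by auto
    moreover have "inc' g = {p, q}" using agree gT' inc_g by auto
    ultimately show False
      using acyc gT' unfolding acyclic_edges_iff by (metis DiffD1)
  qed
qed

lemma spanning_tree_attach_pendant:
  assumes tree: "spanning_tree V' E' inc' T'" and eab: "eab \<notin> T'"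
  shows "spanning_tree V E inc (T' \<union> {ec})"
proof -
  let ?T = "T' \<union> {ec}"
  have T'E: "T' \<subseteq> E - {ea, eb, ec}" and conn: "connected_on V' inc' T'" and acyc: "acyclic_edges inc' T'"
    using tree eab unfolding spanning_tree_def by auto
  have "reachable inc ?T c u" if "u \<in> V" for u
  proof (cases "u = v")
    case True
    then show ?thesis using inc_c by (intro reachable_edge[of ec]) (auto simp: insert_commute)
  next
    case False
    then have "reachable inc' T' c u"
      using conn that neighbours unfolding connected_on_def by blast
    moreover have agree: "\<forall>g\<in>T'. inc' g = inc g" using inc'_agrees T'E by blast
    ultimately have "reachable inc T' c u" using reachable_cong[OF agree] by blast
    then show ?thesis by (rule reachable_mono) auto
  qed
  then have "connected_on V inc ?T"
    unfolding connected_on_def by (metis reachable_sym reachable_trans)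
  moreover have "?T \<subseteq> E" using T'E edges_in_E by auto
  ultimately show ?thesis
    unfolding spanning_tree_def using acyclic_edges_attach_pendant[OF T'E acyc] by blast
qed

lemma acyclic_edges_contract:
  assumes SE: "S \<subseteq> E" and acyc: "acyclic_edges inc S" and S: "ea \<in> S" "eb \<in> S"
  shows "acyclic_edges inc' (S - {ea, eb} \<union> {eab})"
  unfolding acyclic_edges_iff
proof (intro ballI allI impI notI)
  let ?S = "S - {ea, eb} \<union> {eab}"
  have eab: "eab \<notin> S" using SE fresh by auto
  fix g p q assume g: "g \<in> ?S" and inc'_g: "inc' g = {p, q}" and r: "reachable inc' (?S - {g}) p q"
  show False
  proof (cases "g = eab")
    case True
    have "?S - {eab} = S - {ea, eb}" using eab by auto
    then have "reachable inc (S - {ea, eb}) p q"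
      using r True reachable_cong[of "S - {ea, eb}" inc' inc] inc'_agrees SE by auto
    moreover have "{p, q} = {a, b}" using inc'_g True by simp
    ultimately have "reachable inc (S - {ea, eb}) b a"
      using reachable_sym by (auto simp: doubleton_eq_iff)
    then have "reachable inc (S - {ea}) b a"
      by (rule reachable_mono) auto
    moreover have "(v, b) \<in> adj inc (S - {ea})"
      using S inc_b distinct_edges by (intro adj_edge[of eb]) auto
    ultimately have "reachable inc (S - {ea}) v a"
      by (rule converse_rtrancl_into_rtrancl[rotated])
    then show False using acyc S inc_a unfolding acyclic_edges_iff by blast
  next
    case False
    then have gS: "g \<in> S - {ea, eb}" using g by auto
    moreover have "g \<noteq> eab" using gS SE fresh by auto
    ultimately have inc_g: "inc g = {p, q}" using inc'_g by simp
    have "reachable inc (?S - {g} - {eab} \<union> {ea, eb}) p q"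
      using reachable_expand_edge[where eab=eab, OF inc_a inc_b r] .
    moreover have "?S - {g} - {eab} \<union> {ea, eb} = S - {g}" using gS S eab by auto
    ultimately show False using acyc gS inc_g unfolding acyclic_edges_iff by auto
  qed
qed

lemma spanning_tree_contract:
  assumes tree: "spanning_tree V E inc S" and S: "ea \<in> S" "eb \<in> S" "ec \<notin> S"
  shows "spanning_tree V' E' inc' (S - {ea, eb} \<union> {eab})"
proof -
  let ?S = "S - {ea, eb} \<union> {eab}"
  have SE: "S \<subseteq> E" and conn: "connected_on V inc S" and acyc: "acyclic_edges inc S"
    using tree unfolding spanning_tree_def by auto
  have at_v: "\<forall>g\<in>S. v \<in> inc g \<longrightarrow> g = ea \<or> g = eb" using SE edge_at_v S by blast
  have eab: "eab \<notin> S" using SE fresh by auto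
  have "connected_on V' inc' ?S"
    unfolding connected_on_def
  proof (intro ballI)
    fix u w assume u: "u \<in> V'" and w: "w \<in> V'"
    then have "reachable inc S u w" using conn unfolding connected_on_def by blast
    from reachable_contract_path[OF at_v inc_a inc_b eab this] u w
    show "reachable inc' ?S u w" by simp
  qed
  moreover have "?S \<subseteq> E'" using SE S by auto
  ultimately show ?thesis
    unfolding spanning_tree_def using acyclic_edges_contract[OF SE acyc S(1,2)] by blast
qed

lemma spanning_tree_remove_pendant:
  assumes tree: "spanning_tree V E inc T" and T: "ec \<in> T" "ea \<notin> T" "eb \<notin> T"
  shows "spanning_tree V' E' inc' (T - {ec})"
proof -
  have TE: "T \<subseteq> E" and conn: "connected_on V inc T" and acyc: "acyclic_edges inc T"
    using tree unfolding spanning_tree_def by auto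
  have pendant: "\<forall>g\<in>T. v \<in> inc g \<longrightarrow> g = ec" using TE edge_at_v T by blast
  have agree: "\<forall>g\<in>T - {ec}. inc g = inc' g" using TE fresh by auto
  have "connected_on V' inc' (T - {ec})"
    unfolding connected_on_def
  proof (intro ballI)
    fix u w assume u: "u \<in> V'" and w: "w \<in> V'"
    then have "reachable inc T u w" using conn unfolding connected_on_def by blast
    from reachable_remove_pendant_edge[OF pendant inc_c this] u w
    have "reachable inc (T - {ec}) u w" by simp
    then show "reachable inc' (T - {ec}) u w" using reachable_cong[OF agree] by blast
  qed
  moreover have "acyclic_edges inc' (T - {ec})"
    using acyclic_edges_cong[OF agree] acyclic_edges_mono[OF Diff_subset acyc] by (rule iffD1)
  moreover have "T - {ec} \<subseteq> E'" using TE T by auto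
  ultimately show ?thesis unfolding spanning_tree_def by blast
qed

lemma tree_pair_expand:
  assumes pair: "(S', T') \<in> tree_pairs V' E' inc'" and eab: "eab \<in> S'"
  shows "(S' - {eab} \<union> {ea, eb}, T' \<union> {ec}) \<in> tree_pairs V E inc"
proof -
  have trees: "spanning_tree V' E' inc' S'" "spanning_tree V' E' inc' T'"
    and part: "S' \<inter> T' = {}" "S' \<union> T' = E'"
    using pair unfolding tree_pairs_def by auto
  have "eab \<notin> T'" using part eab by auto
  moreover have "S' \<subseteq> E'" "T' \<subseteq> E'" using part by auto
  ultimately show ?thesis
    using spanning_tree_expand[OF trees(1) eab] spanning_tree_attach_pendant[OF trees(2)]
      part distinct_edges edges_in_E fresh eab
    unfolding tree_pairs_def by auto
qed

lemma tree_pair_contract: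
  assumes pair: "(S, T) \<in> tree_pairs V E inc" and split: "ea \<in> S" "eb \<in> S" "ec \<in> T"
  shows "(S - {ea, eb} \<union> {eab}, T - {ec}) \<in> tree_pairs V' E' inc'"
proof -
  have trees: "spanning_tree V E inc S" "spanning_tree V E inc T"
    and part: "S \<inter> T = {}" "S \<union> T = E"
    using pair unfolding tree_pairs_def by auto
  have "ec \<notin> S" "ea \<notin> T" "eb \<notin> T" using part split by auto
  then show ?thesis
    using spanning_tree_contract[OF trees(1) split(1,2)] spanning_tree_remove_pendant[OF trees(2) split(3)]
      part split fresh
    unfolding tree_pairs_def by auto
qed

lemma rho_image_tree_pairs:
  "rho eab ea eb ec ` tree_pairs V' E' inc' = {p \<in> tree_pairs V E inc. pair_split ea eb ec p}"
proof (intro equalityI subsetI)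
  fix p assume "p \<in> rho eab ea eb ec ` tree_pairs V' E' inc'"
  then obtain S' T' where pair: "(S', T') \<in> tree_pairs V' E' inc'" and p: "p = rho eab ea eb ec (S', T')"
    by auto
  have part: "S' \<inter> T' = {}" "S' \<union> T' = E'" using pair unfolding tree_pairs_def by auto
  have not_in: "ea \<notin> S'" "eb \<notin> S'" "ec \<notin> S'" "ea \<notin> T'" "eb \<notin> T'" "ec \<notin> T'"
    using part distinct_edges fresh edges_in_E by auto
  show "p \<in> {p \<in> tree_pairs V E inc. pair_split ea eb ec p}"
  proof (cases "eab \<in> S'")
    case True
    then have "p = (S' - {eab} \<union> {ea, eb}, T' \<union> {ec})" using p unfolding rho_def by simp
    then show ?thesis
      using tree_pair_expand[OF pair True] not_in distinct_edges unfolding pair_split_def by auto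
  next
    case False
    then have "eab \<in> T'" using part by auto
    with pair have "(T' - {eab} \<union> {ea, eb}, S' \<union> {ec}) \<in> tree_pairs V E inc"
      using tree_pair_expand tree_pairs_swap by blast
    then have "(S' \<union> {ec}, T' - {eab} \<union> {ea, eb}) \<in> tree_pairs V E inc"
      by (rule tree_pairs_swap[THEN iffD1])
    moreover have "p = (S' \<union> {ec}, T' - {eab} \<union> {ea, eb})" using p False unfolding rho_def by simp
    ultimately show ?thesis
      using not_in distinct_edges unfolding pair_split_def by auto
  qed
next
  fix p assume "p \<in> {p \<in> tree_pairs V E inc. pair_split ea eb ec p}"
  then obtain S T where p: "p = (S, T)" and pair: "(S, T) \<in> tree_pairs V E inc"
    and split: "pair_split ea eb ec (S, T)" by (cases p) auto
  have "eab \<notin> S" "eab \<notin> T"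
    using pair fresh unfolding tree_pairs_def spanning_tree_def by auto
  with split consider
      "ea \<in> S" "eb \<in> S" "ec \<in> T" "rho eab ea eb ec (S - {ea, eb} \<union> {eab}, T - {ec}) = (S, T)"
    | "ea \<in> T" "eb \<in> T" "ec \<in> S" "rho eab ea eb ec (S - {ec}, T - {ea, eb} \<union> {eab}) = (S, T)"
    unfolding pair_split_def rho_def by auto
  then show "p \<in> rho eab ea eb ec ` tree_pairs V' E' inc'"
  proof cases
    case 1
    then show ?thesis using tree_pair_contract[OF pair 1(1-3)] p by (metis rev_image_eqI)
  next
    case 2
    then have "(T - {ea, eb} \<union> {eab}, S - {ec}) \<in> tree_pairs V' E' inc'"
      using tree_pair_contract pair tree_pairs_swap by blast
    then show ?thesis using 2(4) p tree_pairs_swap by (metis rev_image_eqI)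
  qed
qed

end

lemma tree_pairs_pair_split_degree3:
  assumes pair: "(S, T) \<in> tree_pairs V E inc" and "v \<in> V" "x \<in> V" "x \<noteq> v"
    and at_v: "{e \<in> E. v \<in> inc e} = {ex, ey, ez}"
  shows "pair_split ex ey ez (S, T) \<or> pair_split ex ez ey (S, T) \<or> pair_split ey ez ex (S, T)"
proof -
  have trees: "spanning_tree V E inc S" "spanning_tree V E inc T"
    and part: "S \<inter> T = {}" "S \<union> T = E"
    using pair unfolding tree_pairs_def by auto
  obtain g where "g \<in> S" "v \<in> inc g"
    using spanning_tree_has_edge_at[OF trees(1) assms(2-4)] .
  moreover obtain h where "h \<in> T" "v \<in> inc h"
    using spanning_tree_has_edge_at[OF trees(2) assms(2-4)] .
  ultimately have "g \<in> {ex, ey, ez}" "h \<in> {ex, ey, ez}" "{ex, ey, ez} \<subseteq> S \<union> T"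
    using at_v part by blast+
  with \<open>g \<in> S\<close> \<open>h \<in> T\<close> part(1) show ?thesis
    unfolding pair_split_def by auto
qed

theorem mainTheorem13:
  fixes V :: "'v set" and E :: "'e set" and inc :: "'e \<Rightarrow> 'v set"
    and v x y z :: 'v and ex ey ez exy exz eyz :: 'e
  assumes wf: "wf_graph V E inc"
    and bisp: "bispanning V E inc"
    and atom: "atomic V E inc"
    and vV: "v \<in> V"
    and edges_v: "{e \<in> E. v \<in> inc e} = {ex, ey, ez}"
    and deg3: "card {ex, ey, ez} = 3"
    and inc_x: "inc ex = {v, x}" and inc_y: "inc ey = {v, y}" and inc_z: "inc ez = {v, z}"
    and new_edges: "exy \<notin> E" "exz \<notin> E" "eyz \<notin> E"
  defines "Axy \<equiv> rho exy ex ey ez ` tree_pairs (red_V V v) (red_E E ex ey ez exy) (red_inc inc exy x y)"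
    and "Axz \<equiv> rho exz ex ez ey ` tree_pairs (red_V V v) (red_E E ex ey ez exz) (red_inc inc exz x z)"
    and "Ayz \<equiv> rho eyz ey ez ex ` tree_pairs (red_V V v) (red_E E ex ey ez eyz) (red_inc inc eyz y z)"
  shows "tree_pairs V E inc = Axy \<union> Axz \<union> Ayz \<and>
         Axy \<inter> Axz = {} \<and> Axy \<inter> Ayz = {} \<and> Axz \<inter> Ayz = {}"
proof -
  have distinct: "ex \<noteq> ey" "ex \<noteq> ez" "ey \<noteq> ez"
    using deg3 by (auto simp: card_insert_if split: if_splits)
  have perm: "{ex, ez, ey} = {ex, ey, ez}" "{ey, ez, ex} = {ex, ey, ez}" by auto
  interpret xy: degree3_reduction V E inc v x y z ex ey ez exy
    by unfold_locales (use assms distinct in auto)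
  interpret xz: degree3_reduction V E inc v x z y ex ez ey exz
    by unfold_locales (use assms distinct perm in auto)
  interpret yz: degree3_reduction V E inc v y z x ey ez ex eyz
    by unfold_locales (use assms distinct perm in auto)
  have Axy: "Axy = {p \<in> tree_pairs V E inc. pair_split ex ey ez p}"
    unfolding Axy_def red_V_def red_E_def red_inc_def by (rule xy.rho_image_tree_pairs)
  have Axz: "Axz = {p \<in> tree_pairs V E inc. pair_split ex ez ey p}"
    unfolding Axz_def red_V_def red_E_def red_inc_def perm(1)[symmetric]
    by (rule xz.rho_image_tree_pairs)
  have Ayz: "Ayz = {p \<in> tree_pairs V E inc. pair_split ey ez ex p}"
    unfolding Ayz_def red_V_def red_E_def red_inc_def perm(2)[symmetric]
    by (rule yz.rho_image_tree_pairs)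
  have split: "pair_split ex ey ez p \<or> pair_split ex ez ey p \<or> pair_split ey ez ex p"
    if "p \<in> tree_pairs V E inc" for p
    using that tree_pairs_pair_split_degree3[OF _ vV xy.neighbours(1,2) edges_v] by (cases p) auto
  have exclusive: "\<not> (pair_split ex ey ez p \<and> pair_split ex ez ey p)"
    "\<not> (pair_split ex ey ez p \<and> pair_split ey ez ex p)"
    "\<not> (pair_split ex ez ey p \<and> pair_split ey ez ex p)"
    if "p \<in> tree_pairs V E inc" for p
    using tree_pairs_pair_split_exclusive[OF that] pair_split_commute by metis+
  show ?thesis
    unfolding Axy Axz Ayz using split exclusive by blast
qed

end
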